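(* Let $A$ and $B$ be independent, $(A_n,B_n)_{n\in\mathbb N}$ i.i.d. copies of $(A,B)$, and $X=\sum_{k\ge1}\Pi_{k-1}B_k$ converging a.s. Suppose $\mathbb P\{A=1\}\in[0,1)$ and that one of the following holds: (a) $\mathbb P\{A\in(0,1]\}=1$; (b) $\mathbb P\{A\in(-1,0)\}=1$; (c) $\mathbb P\{|A|\in(0,1]\}=1$ and $\mathbb P\{A=-1\}\in(0,1)$. Suppose $\mathbb P\{B>x\}\sim g(x)e^{-bx}$ as $x\to\infty$ for some $b>0$ and some function $g$ such that $x\mapsto g(\log x)$ is slowly varying at $\infty$ and $\limsup_{x\to\infty}\big(\sup_{1\le y\le x}g(y)\big)/g(x)<\infty$. If $\mathbb E\psi(bA)<\infty$, then $$\mathbb P\{X>x\}\sim \mathbb E\psi(bA)\,\mathbb P\{B>x\},\quad x\to\infty.$$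
   Context: $\Pi_0:=1$, $\Pi_n:=A_1\cdots A_n$. $\psi(s):=\mathbb E e^{sX}$ (finite or infinite), and $\mathbb E\psi(bA)=\int\psi(ba)\,\mathbb P\{A\in da\}$. *)

theory Defs
  imports "HOL-Probability.Probability"
begin

definition slowly_varying :: "(real \<Rightarrow> real) \<Rightarrow> bool" where
  "slowly_varying L \<longleftrightarrow>
     (\<exists>a. set_borel_measurable borel {a..} L \<and> (\<forall>x\<ge>a. L x > 0)) \<and>
     (\<forall>c>0. ((\<lambda>x. L (c * x) / L x) \<longlongrightarrow> 1) at_top)"

definition mgf :: "'a measure \<Rightarrow> ('a \<Rightarrow> real) \<Rightarrow> real \<Rightarrow> ennreal" where
  "mgf M X s = (\<integral>\<^sup>+ \<omega>. ennreal (exp (s * X \<omega>)) \<partial>M)"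

definition perpetuity :: "(nat \<Rightarrow> 'a \<Rightarrow> real) \<Rightarrow> (nat \<Rightarrow> 'a \<Rightarrow> real) \<Rightarrow> 'a \<Rightarrow> real" where
  "perpetuity As Bs \<omega> = (\<Sum>k. (\<Prod>i\<in>{1..k}. As i \<omega>) * Bs (Suc k) \<omega>)"

end

theory Submission
  imports Defs
begin

text \<open>Peeling off the first term gives X = B_1 + A_1 X', where X' has the law of X and is
  independent of (A_1, B_1). Hence P{X > x} = E T(x - A X), where T is the tail of B and A, X are
  independent. Because T(x) \<sim> g(x) exp(-b x) with g \<circ> ln slowly varying, T(x - y)/T(x) tends to
  exp(b y), and the bound on the running supremum of g gives the domination
  T(x - y)/T(x) \<le> 1 + C exp(b y) for all y once x is large. Dominated convergence yields
  P{X > x}/T(x) \<rightarrow> E exp(b A X) = E \<psi>(bA).\<close>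

lemma slowly_varying_ln_eventually_pos:
  assumes "slowly_varying (\<lambda>x. g (ln x))"
  shows "\<forall>\<^sub>F x in at_top. g x > 0"
proof -
  from assms obtain a where a: "\<And>x. x \<ge> a \<Longrightarrow> g (ln x) > 0"
    unfolding slowly_varying_def by blast
  have "\<forall>\<^sub>F y in at_top. exp y \<ge> a"
    using filterlim_at_top[THEN iffD1, OF exp_at_top] by blast
  then show ?thesis
    by eventually_elim (use a in fastforce)
qed

lemma slowly_varying_ln_shift:
  assumes "slowly_varying (\<lambda>x. g (ln x))"
  shows "((\<lambda>x. g (x - y) / g x) \<longlongrightarrow> 1) at_top"
proof -
  from assms have "((\<lambda>u. g (ln (exp (-y) * u)) / g (ln u)) \<longlongrightarrow> 1) at_top"
    unfolding slowly_varying_def by auto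
  from filterlim_compose[OF this exp_at_top] show ?thesis
    by (simp add: o_def ln_mult)
qed

lemma exp_tail_shift_ratio:
  fixes T g :: "real \<Rightarrow> real"
  assumes tail: "T \<sim>[at_top] (\<lambda>x. g x * exp (- b * x))"
    and sv: "slowly_varying (\<lambda>x. g (ln x))"
  shows "((\<lambda>x. T (x - y) / T x) \<longlongrightarrow> exp (b * y)) at_top"
proof -
  define h where "h x = g x * exp (- b * x)" for x
  have "\<forall>\<^sub>F x in at_top. h (x - y) / h x = g (x - y) / g x * exp (b * y)"
    using slowly_varying_ln_eventually_pos[OF sv]
    by eventually_elim (simp add: h_def exp_diff exp_minus field_simps right_diff_distrib)
  moreover have "((\<lambda>x. g (x - y) / g x * exp (b * y)) \<longlongrightarrow> 1 * exp (b * y)) at_top"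
    by (intro tendsto_mult slowly_varying_ln_shift[OF sv] tendsto_const)
  ultimately have lim: "((\<lambda>x. h (x - y) / h x) \<longlongrightarrow> exp (b * y)) at_top"
    by (simp add: tendsto_cong)
  have shift: "filterlim (\<lambda>x::real. x - y) at_top at_top"
    by (rule filterlim_tendsto_add_at_top[OF tendsto_const filterlim_ident, of "- y", simplified])
  have "(\<lambda>x. T (x - y) / T x) \<sim>[at_top] (\<lambda>x. h (x - y) / h x)"
    using asymp_equiv_compose'[OF tail[folded h_def] shift] tail[folded h_def]
    by (rule asymp_equiv_divide)
  then show ?thesis
    using asymp_equiv_tendsto_transfer[OF asymp_equiv_symI lim] by blast
qed

lemma running_sup_ratio_bound:
  fixes g :: "real \<Rightarrow> real"
  assumes "Limsup at_top (\<lambda>x. (SUP y\<in>{1..x}. ereal (g y)) / ereal (g x)) < \<infinity>"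
    and gpos: "\<forall>\<^sub>F x in at_top. g x > 0"
  obtains K where "\<forall>\<^sub>F x in at_top. \<forall>y\<in>{1..x}. g y \<le> K * g x"
proof -
  obtain n :: nat where "Limsup at_top (\<lambda>x. (SUP y\<in>{1..x}. ereal (g y)) / ereal (g x)) < real n"
    using assms(1) less_PInf_Ex_of_nat by auto
  then have "\<forall>\<^sub>F x in at_top. (SUP y\<in>{1..x}. ereal (g y)) / ereal (g x) < real n"
    by (rule Limsup_lessD)
  with gpos have "\<forall>\<^sub>F x in at_top. \<forall>y\<in>{1..x}. g y \<le> real n * g x"
  proof eventually_elim
    case (elim x)
    show ?case
    proof
      fix y assume "y \<in> {1..x}"
      then have "ereal (g y) / ereal (g x) \<le> (SUP y\<in>{1..x}. ereal (g y)) / ereal (g x)"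
        using elim by (intro ereal_divide_right_mono SUP_upper) auto
      also have "\<dots> < real n" using elim by blast
      finally show "g y \<le> real n * g x"
        using elim by (simp add: divide_less_eq)
    qed
  qed
  then show thesis by (rule that)
qed

lemma exp_tail_eventual_bounds:
  fixes T g :: "real \<Rightarrow> real"
  assumes T_nonneg: "\<And>x. 0 \<le> T x"
    and tail: "T \<sim>[at_top] (\<lambda>x. g x * exp (- b * x))"
    and sv: "slowly_varying (\<lambda>x. g (ln x))"
    and sup_g: "Limsup at_top (\<lambda>x. (SUP y\<in>{1..x}. ereal (g y)) / ereal (g x)) < \<infinity>"
  obtains x0 K where "\<And>x. x \<ge> x0 \<Longrightarrow> 1 \<le> x \<and> g x > 0 \<and> (\<forall>y\<in>{1..x}. g y \<le> K * g x)
      \<and> T x \<le> 2 * (g x * exp (- b * x)) \<and> g x * exp (- b * x) \<le> 2 * T x"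
proof -
  define h where "h x = g x * exp (- b * x)" for x
  have gpos: "\<forall>\<^sub>F x in at_top. g x > 0"
    by (rule slowly_varying_ln_eventually_pos[OF sv])
  obtain K where K: "\<forall>\<^sub>F x in at_top. \<forall>y\<in>{1..x}. g y \<le> K * g x"
    using running_sup_ratio_bound[OF sup_g gpos] by blast
  have "\<forall>\<^sub>F x in at_top. norm (T x) \<le> 2 * norm (h x)"
    using asymp_equiv_imp_eventually_le[OF tail[folded h_def], of 2] by simp
  moreover have "\<forall>\<^sub>F x in at_top. norm (T x) \<ge> 1/2 * norm (h x)"
    using asymp_equiv_imp_eventually_ge[OF tail[folded h_def], of "1/2"] by simp
  ultimately have "\<forall>\<^sub>F x in at_top. 1 \<le> x \<and> g x > 0 \<and> (\<forall>y\<in>{1..x}. g y \<le> K * g x)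
      \<and> T x \<le> 2 * h x \<and> h x \<le> 2 * T x"
    using gpos K eventually_ge_at_top[of 1]
    by eventually_elim (use T_nonneg in \<open>auto simp: h_def abs_mult\<close>)
  then show thesis
    unfolding eventually_at_top_linorder h_def using that by blast
qed

lemma exp_tail_ratio_dominated:
  fixes T g :: "real \<Rightarrow> real"
  assumes b: "b > 0"
    and T_anti: "\<And>x y. x \<le> y \<Longrightarrow> T y \<le> T x"
    and T_nonneg: "\<And>x. 0 \<le> T x" and T_le1: "\<And>x. T x \<le> 1"
    and tail: "T \<sim>[at_top] (\<lambda>x. g x * exp (- b * x))"
    and sv: "slowly_varying (\<lambda>x. g (ln x))"
    and sup_g: "Limsup at_top (\<lambda>x. (SUP y\<in>{1..x}. ereal (g y)) / ereal (g x)) < \<infinity>"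
  obtains x0 C where "\<And>x. x \<ge> x0 \<Longrightarrow> T x > 0"
    and "\<And>x y. x \<ge> x0 \<Longrightarrow> T (x - y) / T x \<le> 1 + C * exp (b * y)"
proof -
  define h where "h x = g x * exp (- b * x)" for x
  obtain x0 K where x0: "\<And>x. x \<ge> x0 \<Longrightarrow> 1 \<le> x \<and> g x > 0 \<and> (\<forall>y\<in>{1..x}. g y \<le> K * g x)
      \<and> T x \<le> 2 * h x \<and> h x \<le> 2 * T x"
    using exp_tail_eventual_bounds[OF T_nonneg tail sv sup_g] unfolding h_def by blast
  have hpos: "h x > 0" if "x \<ge> x0" for x using x0[OF that] by (simp add: h_def)
  have Tpos: "T x > 0" if "x \<ge> x0" for x using x0[OF that] hpos[OF that] by linarith
  have K1: "K \<ge> 1"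
  proof -
    have "g x0 \<le> K * g x0" "g x0 > 0" using x0[of x0] by auto
    then show ?thesis by simp
  qed
  define C where "C = 4 * K + 2 * K * exp (b * x0) / g x0"
  have C_ge: "4 * K \<le> C" "2 * K * exp (b * x0) / g x0 \<le> C"
    using K1 x0[of x0] by (auto simp: C_def)
  have "T (x - y) / T x \<le> 1 + C * exp (b * y)" if x: "x \<ge> x0" for x y
  proof -
    consider "y \<le> 0" | "0 < y" "y \<le> x - x0" | "x - x0 < y" by linarith
    then have "T (x - y) \<le> T x + C * exp (b * y) * T x"
    proof cases
      case 1
      have "0 \<le> C * exp (b * y) * T x" using C_ge K1 Tpos[OF x] by simp
      then show ?thesis using T_anti[of x "x - y"] 1 by simp
    next
      case 2
      have "T (x - y) \<le> 2 * (g (x - y) * exp (- b * (x - y)))"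
        using x0[of "x - y"] 2 by (simp add: h_def)
      also have "\<dots> \<le> 2 * (K * g x * exp (- b * (x - y)))"
        using x0[of x] x0[of "x - y"] 2 x by (intro mult_left_mono mult_right_mono) auto
      also have "\<dots> = 2 * K * exp (b * y) * h x"
        by (simp add: h_def exp_diff exp_minus field_simps right_diff_distrib)
      also have "\<dots> \<le> 4 * K * exp (b * y) * T x"
        using x0[OF x] K1 by simp
      also have "\<dots> \<le> C * exp (b * y) * T x"
        using C_ge Tpos[OF x] by (intro mult_right_mono) auto
      finally show ?thesis using Tpos[OF x] by simp
    next
      case 3
      \<comment> \<open>Here only \<open>T \<le> 1\<close> is available, and \<open>g x0 \<le> K * g x\<close> turns \<open>1 / T x\<close> into a multiple of \<open>exp (b * y)\<close>.\<close>
      have "2 * exp (b * x) / g x \<le> 2 * K * exp (b * x0) / g x0 * exp (b * y)"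
      proof -
        have "g x0 \<le> K * g x" using x0[OF x] x0[of x0] x by auto
        moreover have "exp (b * x) \<le> exp (b * x0) * exp (b * y)"
          using 3 b by (simp add: exp_add[symmetric] distrib_left[symmetric])
        ultimately have "2 * exp (b * x) * g x0 \<le> 2 * (exp (b * x0) * exp (b * y)) * (K * g x)"
          using x0[of x0] by (intro mult_mono) auto
        then show ?thesis using x0[OF x] x0[of x0] by (simp add: field_simps)
      qed
      also have "\<dots> \<le> C * exp (b * y)"
        using C_ge by (intro mult_right_mono) auto
      finally have "2 * exp (b * x) / g x * T x \<le> C * exp (b * y) * T x"
        using Tpos[OF x] by (intro mult_right_mono) auto
      moreover have "1 \<le> 2 * exp (b * x) / g x * T x"
        using x0[OF x] by (simp add: h_def exp_minus field_simps)
      ultimately show ?thesis using T_le1[of "x - y"] Tpos[OF x] by linarith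
    qed
    then show ?thesis using Tpos[OF x] by (simp add: divide_le_eq algebra_simps)
  qed
  then show thesis using that Tpos by blast
qed

lemma exp_tail_mixture_asymp_equiv:
  fixes T g :: "real \<Rightarrow> real" and N :: "'b measure" and Y :: "'b \<Rightarrow> real"
  assumes b: "b > 0"
    and T_anti: "\<And>x y. x \<le> y \<Longrightarrow> T y \<le> T x"
    and T_nonneg: "\<And>x. 0 \<le> T x" and T_le1: "\<And>x. T x \<le> 1"
    and tail: "T \<sim>[at_top] (\<lambda>x. g x * exp (- b * x))"
    and sv: "slowly_varying (\<lambda>x. g (ln x))"
    and sup_g: "Limsup at_top (\<lambda>x. (SUP y\<in>{1..x}. ereal (g y)) / ereal (g x)) < \<infinity>"
    and N: "prob_space N" and Y: "Y \<in> borel_measurable N"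
    and finite: "(\<integral>\<^sup>+ z. ennreal (exp (b * Y z)) \<partial>N) < \<infinity>"
  shows "(\<lambda>x. \<integral>z. T (x - Y z) \<partial>N)
           \<sim>[at_top] (\<lambda>x. enn2real (\<integral>\<^sup>+ z. ennreal (exp (b * Y z)) \<partial>N) * T x)"
proof -
  interpret N: prob_space N by fact
  obtain x0 C where Tpos: "\<And>x. x \<ge> x0 \<Longrightarrow> T x > 0"
    and dom: "\<And>x y. x \<ge> x0 \<Longrightarrow> T (x - y) / T x \<le> 1 + C * exp (b * y)"
    using exp_tail_ratio_dominated[OF b T_anti T_nonneg T_le1 tail sv sup_g] by blast
  have int_exp: "integrable N (\<lambda>z. exp (b * Y z))"
    using finite Y by (intro integrableI_bounded) auto
  have c_eq: "enn2real (\<integral>\<^sup>+ z. ennreal (exp (b * Y z)) \<partial>N) = (\<integral>z. exp (b * Y z) \<partial>N)"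
    by (rule integral_eq_nn_integral[symmetric]) (use Y in auto)
  have c_nz: "(\<integral>z. exp (b * Y z) \<partial>N) \<noteq> 0"
  proof
    assume "(\<integral>z. exp (b * Y z) \<partial>N) = 0"
    then have "AE z in N. False"
      using int_exp by (subst (asm) integral_nonneg_eq_0_iff_AE) auto
    then show False by simp
  qed
  have T_shift_measurable: "(\<lambda>z. T (x - Y z)) \<in> borel_measurable N" for x
  proof -
    have "mono (\<lambda>u. T (x - u))" by (intro monoI T_anti) auto
    from measurable_compose[OF Y borel_measurable_mono[OF this]] show ?thesis by simp
  qed
  have "((\<lambda>x. \<integral>z. T (x - Y z) / T x \<partial>N) \<longlongrightarrow> (\<integral>z. exp (b * Y z) \<partial>N)) at_top"
  proof (rule integral_dominated_convergence_at_top[where w="\<lambda>z. 1 + C * exp (b * Y z)"])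
    show "(\<lambda>z. exp (b * Y z)) \<in> borel_measurable N" "\<And>x. (\<lambda>z. T (x - Y z) / T x) \<in> borel_measurable N"
      using Y T_shift_measurable by measurable
    show "integrable N (\<lambda>z. 1 + C * exp (b * Y z))"
      using int_exp by auto
    show "AE z in N. ((\<lambda>x. T (x - Y z) / T x) \<longlongrightarrow> exp (b * Y z)) at_top"
      using exp_tail_shift_ratio[OF tail sv] by simp
    show "\<forall>\<^sub>F x in at_top. AE z in N. norm (T (x - Y z) / T x) \<le> 1 + C * exp (b * Y z)"
      using eventually_ge_at_top[of x0] by eventually_elim (use dom T_nonneg in auto)
  qed
  then have "((\<lambda>x. (\<integral>z. T (x - Y z) \<partial>N) / T x) \<longlongrightarrow> (\<integral>z. exp (b * Y z) \<partial>N)) at_top"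
    by simp
  from asymp_equivI'_const[OF this] c_nz show ?thesis
    unfolding c_eq by simp
qed

text \<open>The perpetuity as a function on sequence space, so that its law is determined by the law
  of the sequence (A_n, B_n)_{n \<ge> 1}.\<close>
definition perpetuity_seq :: "(nat \<Rightarrow> real \<times> real) \<Rightarrow> real" where
  "perpetuity_seq z = (\<Sum>k. (\<Prod>i\<in>{1..k}. fst (z i)) * snd (z (Suc k)))"

lemma perpetuity_eq_perpetuity_seq:
  "perpetuity As Bs \<omega> = perpetuity_seq (\<lambda>i\<in>{1..}. (As i \<omega>, Bs i \<omega>))"
  unfolding perpetuity_def perpetuity_seq_def
  by (intro suminf_cong arg_cong2[where f="(*)"] prod.cong) auto

lemma measurable_perpetuity_seq:
  "perpetuity_seq \<in> borel_measurable (PiM {1..} (\<lambda>_. borel \<Otimes>\<^sub>M borel))"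
proof -
  have "(\<lambda>z::nat \<Rightarrow> real \<times> real. (\<Prod>i\<in>{1..k}. fst (z i)) * snd (z (Suc k)))
      \<in> borel_measurable (PiM {1..} (\<lambda>_. borel \<Otimes>\<^sub>M borel))" for k
    by measurable
  then show ?thesis
    unfolding perpetuity_seq_def by (rule borel_measurable_suminf)
qed

lemma measurable_perpetuity:
  assumes "\<And>n. As n \<in> borel_measurable M" and "\<And>n. Bs n \<in> borel_measurable M"
  shows "perpetuity As Bs \<in> borel_measurable M"
  unfolding perpetuity_def using assms by measurable

lemma measurable_shift_PiM:
  assumes "{2..} \<subseteq> J"
  shows "(\<lambda>z. \<lambda>n\<in>{1..}. z (Suc n)) \<in> measurable (PiM J (\<lambda>_. N)) (PiM {1::nat..} (\<lambda>_. N))"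
  using assms by (intro measurable_restrict measurable_component_singleton) auto

lemma perpetuity_unfold:
  assumes "summable (\<lambda>k. (\<Prod>i\<in>{1..k}. As i \<omega>) * Bs (Suc k) \<omega>)"
  shows "perpetuity As Bs \<omega> = Bs 1 \<omega> + As 1 \<omega> * perpetuity (\<lambda>i. As (Suc i)) (\<lambda>i. Bs (Suc i)) \<omega>"
proof -
  define f where "f k = (\<Prod>i\<in>{1..k}. As i \<omega>) * Bs (Suc k) \<omega>" for k
  define h where "h k = (\<Prod>i\<in>{1..k}. As (Suc i) \<omega>) * Bs (Suc (Suc k)) \<omega>" for k
  have f_Suc: "f (Suc k) = As 1 \<omega> * h k" for k
  proof -
    have "(\<Prod>i\<in>{1..Suc k}. As i \<omega>) = As 1 \<omega> * (\<Prod>i\<in>{Suc 1..Suc k}. As i \<omega>)"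
      by (subst prod.atLeast_Suc_atMost) auto
    also have "(\<Prod>i\<in>{Suc 1..Suc k}. As i \<omega>) = (\<Prod>i\<in>{1..k}. As (Suc i) \<omega>)"
      by (rule prod.shift_bounds_cl_Suc_ivl)
    finally show ?thesis by (simp add: f_def h_def)
  qed
  have "summable f" using assms unfolding f_def[abs_def] .
  then have "suminf f = f 0 + (\<Sum>k. f (Suc k))"
    by (simp add: suminf_split_head)
  also have "(\<Sum>k. f (Suc k)) = As 1 \<omega> * suminf h"
  proof (cases "As 1 \<omega> = 0")
    case False
    have "summable (\<lambda>k. f (Suc k))"
      using \<open>summable f\<close> by (simp add: summable_Suc_iff)
    then have "summable (\<lambda>k. As 1 \<omega> * h k)"
      by (simp add: f_Suc)
    then show ?thesis using False by (simp add: f_Suc suminf_mult summable_cmult_iff)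
  qed (simp add: f_Suc)
  finally show ?thesis by (simp add: perpetuity_def f_def[abs_def] h_def[abs_def])
qed

lemma (in prob_space) iid_shift_distr_eq:
  fixes Z :: "nat \<Rightarrow> 'a \<Rightarrow> 'b"
  assumes indep: "indep_vars (\<lambda>_. N) Z {1..}"
    and rv: "\<And>i. random_variable N (Z i)"
    and ident: "\<And>i. i \<ge> 1 \<Longrightarrow> distr M N (Z i) = D"
  shows "distr M (PiM {1..} (\<lambda>_. N)) (\<lambda>\<omega>. \<lambda>i\<in>{1..}. Z (Suc i) \<omega>)
       = distr M (PiM {1..} (\<lambda>_. N)) (\<lambda>\<omega>. \<lambda>i\<in>{1..}. Z i \<omega>)"
proof -
  define shift where "shift z = (\<lambda>i\<in>{1..}. z (Suc i))" for z :: "nat \<Rightarrow> 'b"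
  have W: "(\<lambda>\<omega>. \<lambda>i\<in>{1..}. Z i \<omega>) \<in> measurable M (PiM {1..} (\<lambda>_. N))"
    using rv by (intro measurable_restrict) auto
  have law: "distr M (PiM {1..} (\<lambda>_. N)) (\<lambda>\<omega>. \<lambda>i\<in>{1..}. Z i \<omega>) = PiM {1..} (\<lambda>_. D)"
  proof -
    have "distr M (PiM {1..} (\<lambda>_. N)) (\<lambda>\<omega>. \<lambda>i\<in>{1..}. Z i \<omega>) = PiM {1..} (\<lambda>i. distr M N (Z i))"
      by (rule indep_vars_iff_distr_eq_PiM[THEN iffD1]) (use indep rv in auto)
    also have "\<dots> = PiM {1..} (\<lambda>_. D)"
      by (intro PiM_cong refl) (simp add: ident)
    finally show ?thesis .
  qed
  have shift: "shift \<in> measurable (PiM {1..} (\<lambda>_. N)) (PiM {1..} (\<lambda>_. N))"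
    unfolding shift_def by (rule measurable_shift_PiM) auto
  have "(\<lambda>\<omega>. \<lambda>i\<in>{1..}. Z (Suc i) \<omega>) = shift \<circ> (\<lambda>\<omega>. \<lambda>i\<in>{1..}. Z i \<omega>)"
    by (auto simp: shift_def fun_eq_iff)
  then have "distr M (PiM {1..} (\<lambda>_. N)) (\<lambda>\<omega>. \<lambda>i\<in>{1..}. Z (Suc i) \<omega>)
      = distr (distr M (PiM {1..} (\<lambda>_. N)) (\<lambda>\<omega>. \<lambda>i\<in>{1..}. Z i \<omega>)) (PiM {1..} (\<lambda>_. N)) shift"
    using distr_distr[OF shift W] by simp
  also have "\<dots> = distr (PiM {1..} (\<lambda>_. D)) (PiM {1..} (\<lambda>_. D)) shift"
    unfolding law by (intro distr_cong refl sets_PiM_cong) (simp flip: ident[of 1])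
  also have "\<dots> = PiM {1..} (\<lambda>_. D)"
    unfolding shift_def
    by (rule distr_PiM_reindex) (auto simp flip: ident[of 1] intro: prob_space_distr[OF rv])
  finally show ?thesis unfolding law .
qed

lemma (in prob_space) distr_head_shift_eq_pair:
  fixes Z :: "nat \<Rightarrow> 'a \<Rightarrow> 'b" and F :: "(nat \<Rightarrow> 'b) \<Rightarrow> 'c"
  assumes indep: "indep_vars (\<lambda>_. N) Z {1..}"
    and rv: "\<And>i. random_variable N (Z i)"
    and F: "F \<in> measurable (PiM {1..} (\<lambda>_. N)) K"
  shows "distr M (N \<Otimes>\<^sub>M K) (\<lambda>\<omega>. (Z 1 \<omega>, F (\<lambda>i\<in>{1..}. Z (Suc i) \<omega>)))
       = distr M N (Z 1) \<Otimes>\<^sub>M distr M K (\<lambda>\<omega>. F (\<lambda>i\<in>{1..}. Z (Suc i) \<omega>))"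
proof -
  define R1 where "R1 \<omega> = (\<lambda>i\<in>{1}. Z i \<omega>)" for \<omega>
  define R2 where "R2 \<omega> = (\<lambda>i\<in>{2..}. Z i \<omega>)" for \<omega>
  define G where "G v = F (\<lambda>i\<in>{1..}. v (Suc i))" for v
  have mR1: "R1 \<in> measurable M (PiM {1} (\<lambda>_. N))"
    unfolding R1_def using rv by (intro measurable_restrict) auto
  have mR2: "R2 \<in> measurable M (PiM {2..} (\<lambda>_. N))"
    unfolding R2_def using rv by (intro measurable_restrict) auto
  have mhead: "(\<lambda>u. u 1) \<in> measurable (PiM {1} (\<lambda>_. N)) N"
    by (rule measurable_component_singleton) auto
  have mG: "G \<in> measurable (PiM {2..} (\<lambda>_. N)) K"
    unfolding G_def using measurable_compose[OF measurable_shift_PiM F] by simp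
  have R: "(\<lambda>\<omega>. (Z 1 \<omega>, F (\<lambda>i\<in>{1..}. Z (Suc i) \<omega>))) = (\<lambda>(u, v). (u 1, G v)) \<circ> (\<lambda>\<omega>. (R1 \<omega>, R2 \<omega>))"
    "Z 1 = (\<lambda>u. u 1) \<circ> R1" "(\<lambda>\<omega>. F (\<lambda>i\<in>{1..}. Z (Suc i) \<omega>)) = G \<circ> R2"
    by (auto simp: fun_eq_iff R1_def R2_def G_def intro!: arg_cong[where f=F])
  have indep_R: "distr M (PiM {1} (\<lambda>_. N) \<Otimes>\<^sub>M PiM {2..} (\<lambda>_. N)) (\<lambda>\<omega>. (R1 \<omega>, R2 \<omega>))
      = distr M (PiM {1} (\<lambda>_. N)) R1 \<Otimes>\<^sub>M distr M (PiM {2..} (\<lambda>_. N)) R2"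
    using indep_var_restrict[OF indep, of "{1}" "{2..}"]
    by (simp add: indep_var_distribution_eq R1_def[abs_def] R2_def[abs_def])
  have mRR: "(\<lambda>\<omega>. (R1 \<omega>, R2 \<omega>)) \<in> measurable M (PiM {1} (\<lambda>_. N) \<Otimes>\<^sub>M PiM {2..} (\<lambda>_. N))"
    using mR1 mR2 by measurable
  have mq: "(\<lambda>(u, v). (u 1, G v)) \<in> measurable (PiM {1} (\<lambda>_. N) \<Otimes>\<^sub>M PiM {2..} (\<lambda>_. N)) (N \<Otimes>\<^sub>M K)"
    using mhead mG by measurable
  have "sigma_finite_measure (distr (distr M (PiM {2..} (\<lambda>_. N)) R2) K G)"
    using mR2 mG by (intro prob_space_imp_sigma_finite prob_space.prob_space_distr prob_space_distr) auto
  then have "distr M (N \<Otimes>\<^sub>M K) ((\<lambda>(u, v). (u 1, G v)) \<circ> (\<lambda>\<omega>. (R1 \<omega>, R2 \<omega>)))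
      = distr (distr M (PiM {1} (\<lambda>_. N)) R1) N (\<lambda>u. u 1) \<Otimes>\<^sub>M distr (distr M (PiM {2..} (\<lambda>_. N)) R2) K G"
    unfolding distr_distr[OF mq mRR, symmetric] indep_R
    by (intro pair_measure_distr[symmetric]) (use mhead mG in simp_all)
  then show ?thesis
    unfolding distr_distr[OF mhead mR1] distr_distr[OF mG mR2] R[symmetric] .
qed

lemma (in prob_space) perpetuity_first_step_distr:
  fixes As Bs :: "nat \<Rightarrow> 'a \<Rightarrow> real"
  assumes rvAs: "\<And>n. As n \<in> borel_measurable M" and rvBs: "\<And>n. Bs n \<in> borel_measurable M"
    and indep: "indep_vars (\<lambda>_. borel \<Otimes>\<^sub>M borel) (\<lambda>n \<omega>. (As n \<omega>, Bs n \<omega>)) {1..}"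
    and ident: "\<And>n. n \<ge> 1 \<Longrightarrow> distr M (borel \<Otimes>\<^sub>M borel) (\<lambda>\<omega>. (As n \<omega>, Bs n \<omega>)) = D"
  shows "distr M ((borel \<Otimes>\<^sub>M borel) \<Otimes>\<^sub>M borel)
           (\<lambda>\<omega>. ((As 1 \<omega>, Bs 1 \<omega>), perpetuity (\<lambda>i. As (Suc i)) (\<lambda>i. Bs (Suc i)) \<omega>))
       = D \<Otimes>\<^sub>M distr M borel (perpetuity As Bs)"
proof -
  define Z where "Z n \<omega> = (As n \<omega>, Bs n \<omega>)" for n \<omega>
  have rvZ: "random_variable (borel \<Otimes>\<^sub>M borel) (Z n)" for n
    unfolding Z_def using rvAs rvBs by measurable
  have W: "(\<lambda>\<omega>. \<lambda>i\<in>{1..}. Z i \<omega>) \<in> measurable M (PiM {1..} (\<lambda>_. borel \<Otimes>\<^sub>M borel))"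
    "(\<lambda>\<omega>. \<lambda>i\<in>{1..}. Z (Suc i) \<omega>) \<in> measurable M (PiM {1..} (\<lambda>_. borel \<Otimes>\<^sub>M borel))"
    using rvZ by (auto intro!: measurable_restrict)
  have X_eq: "perpetuity As Bs = (\<lambda>\<omega>. perpetuity_seq (\<lambda>i\<in>{1..}. Z i \<omega>))"
    by (simp add: fun_eq_iff perpetuity_eq_perpetuity_seq Z_def)
  have "distr M borel (\<lambda>\<omega>. perpetuity_seq (\<lambda>i\<in>{1..}. Z (Suc i) \<omega>))
      = distr (distr M (PiM {1..} (\<lambda>_. borel \<Otimes>\<^sub>M borel)) (\<lambda>\<omega>. \<lambda>i\<in>{1..}. Z (Suc i) \<omega>)) borel perpetuity_seq"
    using distr_distr[OF measurable_perpetuity_seq W(2)] by (simp add: o_def)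
  also have "\<dots> = distr (distr M (PiM {1..} (\<lambda>_. borel \<Otimes>\<^sub>M borel)) (\<lambda>\<omega>. \<lambda>i\<in>{1..}. Z i \<omega>)) borel perpetuity_seq"
    using indep rvZ ident by (subst iid_shift_distr_eq) (auto simp: Z_def[abs_def])
  also have "\<dots> = distr M borel (perpetuity As Bs)"
    unfolding X_eq distr_distr[OF measurable_perpetuity_seq W(1)] by (simp add: o_def)
  finally have law: "distr M borel (\<lambda>\<omega>. perpetuity_seq (\<lambda>i\<in>{1..}. Z (Suc i) \<omega>)) = distr M borel (perpetuity As Bs)" .
  have "indep_vars (\<lambda>_. borel \<Otimes>\<^sub>M borel) Z {1..}"
    using indep by (simp add: Z_def[abs_def])
  from distr_head_shift_eq_pair[OF this rvZ measurable_perpetuity_seq]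
  show ?thesis
    using ident[of 1] law by (simp add: Z_def[abs_def] perpetuity_eq_perpetuity_seq)
qed

lemma measure_pair_affine_greater:
  fixes PA PB PX :: "real measure" and x :: real
  assumes pB: "prob_space PB" and pX: "prob_space PX"
    and sA[measurable_cong]: "sets PA = sets borel" and sB[measurable_cong]: "sets PB = sets borel"
    and sX[measurable_cong]: "sets PX = sets borel"
  shows "measure ((PA \<Otimes>\<^sub>M PB) \<Otimes>\<^sub>M PX) {w. x < snd (fst w) + fst (fst w) * snd w}
       = (\<integral>p. measure PB {x - fst p * snd p <..} \<partial>(PA \<Otimes>\<^sub>M PX))"
proof -
  define S where "S = {w::(real\<times>real)\<times>real. x < snd (fst w) + fst (fst w) * snd w}"
  define T where "T t = measure PB {t <..}" for t
  have sfB: "sigma_finite_measure PB" and sfX: "sigma_finite_measure PX"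
    using pB pX by (auto intro: prob_space_imp_sigma_finite)
  have "{w\<in>space ((PA \<Otimes>\<^sub>M PB) \<Otimes>\<^sub>M PX). x < snd (fst w) + fst (fst w) * snd w} \<in> sets ((PA \<Otimes>\<^sub>M PB) \<Otimes>\<^sub>M PX)"
    by measurable
  then have S: "S \<in> sets ((PA \<Otimes>\<^sub>M PB) \<Otimes>\<^sub>M PX)"
    using sets_eq_imp_space_eq[OF sA] sets_eq_imp_space_eq[OF sB] sets_eq_imp_space_eq[OF sX]
    by (simp add: S_def space_pair_measure)
  have T_meas: "(\<lambda>u. T (x - u)) \<in> borel_measurable borel"
    using pB sB unfolding T_def prob_space_def
    by (intro borel_measurable_mono monoI finite_measure.finite_measure_mono) auto
  have inner: "(\<integral>\<^sup>+ b. indicator S ((a, b), y) \<partial>PB) = ennreal (T (x - a * y))" for a y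
  proof -
    have "(\<lambda>b. indicator S ((a, b), y) :: ennreal) = indicator {x - a * y <..}"
      by (auto simp: S_def indicator_def algebra_simps)
    then show ?thesis
      using pB sB unfolding T_def prob_space_def by (simp add: finite_measure.emeasure_eq_measure)
  qed
  have "emeasure ((PA \<Otimes>\<^sub>M PB) \<Otimes>\<^sub>M PX) S = (\<integral>\<^sup>+ w. indicator S w \<partial>((PA \<Otimes>\<^sub>M PB) \<Otimes>\<^sub>M PX))"
    using S by simp
  also have "\<dots> = (\<integral>\<^sup>+ ab. \<integral>\<^sup>+ y. indicator S (ab, y) \<partial>PX \<partial>(PA \<Otimes>\<^sub>M PB))"
    by (rule sigma_finite_measure.nn_integral_fst[OF sfX, symmetric]) (use S in simp)
  also have "\<dots> = (\<integral>\<^sup>+ a. \<integral>\<^sup>+ b. \<integral>\<^sup>+ y. indicator S ((a, b), y) \<partial>PX \<partial>PB \<partial>PA)"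
    using S by (intro sigma_finite_measure.nn_integral_fst[OF sfB, symmetric]
        sigma_finite_measure.borel_measurable_nn_integral[OF sfX]) simp
  also have "\<dots> = (\<integral>\<^sup>+ a. \<integral>\<^sup>+ y. \<integral>\<^sup>+ b. indicator S ((a, b), y) \<partial>PB \<partial>PX \<partial>PA)"
    using sfB sfX
    by (intro nn_integral_cong pair_sigma_finite.Fubini'[symmetric]) (auto simp: S_def pair_sigma_finite_def)
  also have "\<dots> = (\<integral>\<^sup>+ p. ennreal (T (x - fst p * snd p)) \<partial>(PA \<Otimes>\<^sub>M PX))"
  proof -
    have "(\<lambda>p. ennreal (T (x - fst p * snd p))) \<in> borel_measurable (PA \<Otimes>\<^sub>M PX)"
      using T_meas by measurable
    from sigma_finite_measure.nn_integral_fst[OF sfX this] show ?thesis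
      unfolding inner by simp
  qed
  finally have "emeasure ((PA \<Otimes>\<^sub>M PB) \<Otimes>\<^sub>M PX) S = (\<integral>\<^sup>+ p. ennreal (T (x - fst p * snd p)) \<partial>(PA \<Otimes>\<^sub>M PX))" .
  moreover have "(\<lambda>p. T (x - fst p * snd p)) \<in> borel_measurable (PA \<Otimes>\<^sub>M PX)"
    using T_meas by measurable
  ultimately have "measure ((PA \<Otimes>\<^sub>M PB) \<Otimes>\<^sub>M PX) S = (\<integral>p. T (x - fst p * snd p) \<partial>(PA \<Otimes>\<^sub>M PX))"
    by (simp add: measure_def integral_eq_nn_integral T_def)
  then show ?thesis by (simp add: S_def T_def)
qed

lemma (in prob_space) perpetuity_tail_eq_integral:
  fixes A B :: "'a \<Rightarrow> real" and As Bs :: "nat \<Rightarrow> 'a \<Rightarrow> real"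
  assumes rvAs: "\<And>n. As n \<in> borel_measurable M" and rvBs: "\<And>n. Bs n \<in> borel_measurable M"
    and indepAB: "indep_var borel A borel B"
    and indep: "indep_vars (\<lambda>_. borel \<Otimes>\<^sub>M borel) (\<lambda>n \<omega>. (As n \<omega>, Bs n \<omega>)) {1..}"
    and ident: "\<And>n. n \<ge> 1 \<Longrightarrow> distr M (borel \<Otimes>\<^sub>M borel) (\<lambda>\<omega>. (As n \<omega>, Bs n \<omega>))
                                = distr M (borel \<Otimes>\<^sub>M borel) (\<lambda>\<omega>. (A \<omega>, B \<omega>))"
    and conv: "AE \<omega> in M. summable (\<lambda>k. (\<Prod>i\<in>{1..k}. As i \<omega>) * Bs (Suc k) \<omega>)"
  shows "measure M {\<omega>\<in>space M. perpetuity As Bs \<omega> > x}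
       = (\<integral>p. measure M {\<omega>\<in>space M. B \<omega> > x - fst p * snd p}
             \<partial>(distr M borel A \<Otimes>\<^sub>M distr M borel (perpetuity As Bs)))"
proof -
  define X' where "X' = perpetuity (\<lambda>i. As (Suc i)) (\<lambda>i. Bs (Suc i))"
  define PA where "PA = distr M borel A"
  define PB where "PB = distr M borel B"
  define PX where "PX = distr M borel (perpetuity As Bs)"
  define S where "S = {w :: (real \<times> real) \<times> real. x < snd (fst w) + fst (fst w) * snd w}"
  have rvA: "random_variable borel A" and rvB: "random_variable borel B"
    using indepAB by (auto dest: indep_var_rv1 indep_var_rv2)
  have mX: "perpetuity As Bs \<in> borel_measurable M" and mX': "X' \<in> borel_measurable M"
    unfolding X'_def using rvAs rvBs by (auto intro: measurable_perpetuity)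
  have mJ: "(\<lambda>\<omega>. ((As 1 \<omega>, Bs 1 \<omega>), X' \<omega>)) \<in> measurable M ((borel \<Otimes>\<^sub>M borel) \<Otimes>\<^sub>M borel)"
    using rvAs rvBs mX' by measurable
  have mS: "S \<in> sets ((borel \<Otimes>\<^sub>M borel) \<Otimes>\<^sub>M borel)"
  proof -
    have "{w \<in> space ((borel \<Otimes>\<^sub>M borel) \<Otimes>\<^sub>M borel). x < snd (fst w) + fst (fst w) * snd w}
        \<in> sets ((borel \<Otimes>\<^sub>M borel) \<Otimes>\<^sub>M borel)"
      by measurable
    then show ?thesis by (simp add: S_def space_pair_measure)
  qed
  have joint: "distr M ((borel \<Otimes>\<^sub>M borel) \<Otimes>\<^sub>M borel) (\<lambda>\<omega>. ((As 1 \<omega>, Bs 1 \<omega>), X' \<omega>)) = (PA \<Otimes>\<^sub>M PB) \<Otimes>\<^sub>M PX"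
    unfolding X'_def PX_def
    using perpetuity_first_step_distr[OF rvAs rvBs indep ident] indepAB
    by (simp add: indep_var_distribution_eq PA_def PB_def)
  have PB_tail: "measure PB {t<..} = measure M {\<omega>\<in>space M. B \<omega> > t}" for t
    unfolding PB_def using rvB by (subst measure_distr) (auto simp: vimage_def Int_def conj_commute)
  have "measure M {\<omega>\<in>space M. perpetuity As Bs \<omega> > x} = measure M {\<omega>\<in>space M. x < Bs 1 \<omega> + As 1 \<omega> * X' \<omega>}"
  proof (rule measure_eq_AE)
    show "AE \<omega> in M. (\<omega> \<in> {\<omega>\<in>space M. perpetuity As Bs \<omega> > x}) = (\<omega> \<in> {\<omega>\<in>space M. x < Bs 1 \<omega> + As 1 \<omega> * X' \<omega>})"
      using conv by eventually_elim (simp add: perpetuity_unfold X'_def)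
  qed (use mX mX' rvAs rvBs in measurable)
  also have "\<dots> = measure ((PA \<Otimes>\<^sub>M PB) \<Otimes>\<^sub>M PX) S"
    unfolding joint[symmetric] using mJ mS
    by (subst measure_distr) (auto simp: S_def vimage_def Int_def conj_commute space_pair_measure)
  also have "\<dots> = (\<integral>p. measure PB {x - fst p * snd p<..} \<partial>(PA \<Otimes>\<^sub>M PX))"
    unfolding S_def PA_def PB_def PX_def using rvA rvB mX
    by (intro measure_pair_affine_greater prob_space_distr) auto
  finally show ?thesis by (simp add: PA_def PX_def PB_tail)
qed

lemma (in prob_space) nn_integral_mgf_mixture:
  assumes "X \<in> borel_measurable M"
  shows "(\<integral>\<^sup>+ a. mgf M X (b * a) \<partial>(distr M borel A))
       = (\<integral>\<^sup>+ p. ennreal (exp (b * (fst p * snd p))) \<partial>(distr M borel A \<Otimes>\<^sub>M distr M borel X))"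
proof -
  have mgf: "mgf M X (b * a) = (\<integral>\<^sup>+ y. ennreal (exp (b * (a * y))) \<partial>distr M borel X)" for a
    unfolding mgf_def using assms by (simp add: nn_integral_distr mult.assoc)
  have "(\<lambda>p. ennreal (exp (b * (fst p * snd p)))) \<in> borel_measurable (distr M borel A \<Otimes>\<^sub>M distr M borel X)"
    by measurable
  from sigma_finite_measure.nn_integral_fst[OF prob_space_imp_sigma_finite[OF prob_space_distr[OF assms]] this]
  show ?thesis unfolding mgf by simp
qed

theorem proposition2p1:
  fixes M :: "'a measure" and A B :: "'a \<Rightarrow> real" and As Bs :: "nat \<Rightarrow> 'a \<Rightarrow> real"
    and g :: "real \<Rightarrow> real" and b :: real
  assumes P: "prob_space M"
    and rvA: "A \<in> borel_measurable M" and rvB: "B \<in> borel_measurable M"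
    and rvAs: "\<And>n. As n \<in> borel_measurable M" and rvBs: "\<And>n. Bs n \<in> borel_measurable M"
    and indepAB: "prob_space.indep_var M borel A borel B"
    and indep_seq: "prob_space.indep_vars M (\<lambda>_. borel \<Otimes>\<^sub>M borel)
                      (\<lambda>n \<omega>. (As n \<omega>, Bs n \<omega>)) {1..}"
    and ident: "\<And>n. n \<ge> 1 \<Longrightarrow>
        distr M (borel \<Otimes>\<^sub>M borel) (\<lambda>\<omega>. (As n \<omega>, Bs n \<omega>))
          = distr M (borel \<Otimes>\<^sub>M borel) (\<lambda>\<omega>. (A \<omega>, B \<omega>))"
    and conv: "AE \<omega> in M. summable (\<lambda>k. (\<Prod>i\<in>{1..k}. As i \<omega>) * Bs (Suc k) \<omega>)"
    and A1: "measure M {\<omega>\<in>space M. A \<omega> = 1} < 1"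
    and cases: "measure M {\<omega>\<in>space M. 0 < A \<omega> \<and> A \<omega> \<le> 1} = 1
              \<or> measure M {\<omega>\<in>space M. -1 < A \<omega> \<and> A \<omega> < 0} = 1
              \<or> (measure M {\<omega>\<in>space M. 0 < \<bar>A \<omega>\<bar> \<and> \<bar>A \<omega>\<bar> \<le> 1} = 1
                 \<and> 0 < measure M {\<omega>\<in>space M. A \<omega> = -1}
                 \<and> measure M {\<omega>\<in>space M. A \<omega> = -1} < 1)"
    and b_pos: "b > 0"
    and tail: "(\<lambda>x. measure M {\<omega>\<in>space M. B \<omega> > x}) \<sim>[at_top] (\<lambda>x. g x * exp (- b * x))"
    and sv: "slowly_varying (\<lambda>x. g (ln x))"
    and sup_g: "Limsup at_top (\<lambda>x. (SUP y\<in>{1..x}. ereal (g y)) / ereal (g x)) < \<infinity>"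
    and finite_mgf: "(\<integral>\<^sup>+ a. mgf M (perpetuity As Bs) (b * a) \<partial>(distr M borel A)) < \<infinity>"
  shows "(\<lambda>x. measure M {\<omega>\<in>space M. perpetuity As Bs \<omega> > x})
           \<sim>[at_top] (\<lambda>x. enn2real (\<integral>\<^sup>+ a. mgf M (perpetuity As Bs) (b * a) \<partial>(distr M borel A))
                          * measure M {\<omega>\<in>space M. B \<omega> > x})"
proof -
  interpret prob_space M by (rule P)
  define N where "N = distr M borel A \<Otimes>\<^sub>M distr M borel (perpetuity As Bs)"
  define T where "T x = measure M {\<omega>\<in>space M. B \<omega> > x}" for x
  have mX: "perpetuity As Bs \<in> borel_measurable M"
    using rvAs rvBs by (rule measurable_perpetuity)
  have "prob_space N"
    unfolding N_def using rvA mX by (intro prob_space_pair prob_space_distr)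
  moreover have "T y \<le> T x" if "x \<le> y" for x y
    unfolding T_def using that rvB by (intro finite_measure_mono) auto
  moreover note tail[folded T_def] finite_mgf[unfolded nn_integral_mgf_mixture[OF mX]]
  ultimately have "(\<lambda>x. \<integral>p. T (x - fst p * snd p) \<partial>N)
      \<sim>[at_top] (\<lambda>x. enn2real (\<integral>\<^sup>+ p. ennreal (exp (b * (fst p * snd p))) \<partial>N) * T x)"
    unfolding N_def
    by (intro exp_tail_mixture_asymp_equiv[OF b_pos _ _ _ _ sv sup_g]) (auto simp: T_def)
  then show ?thesis
    using perpetuity_tail_eq_integral[OF rvAs rvBs indepAB indep_seq ident conv]
    by (simp add: T_def N_def nn_integral_mgf_mixture[OF mX])
qed

end
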